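(* For every function $g\in A$ with $g\not\equiv 0$ there exist an orthonormal system $\{\varphi_n\}_{n\ge1}$ on $[0,1]$ and a sequence $a=\{a_n\}\in\ell_2$ such that, with $d_k=1$ for all $k$, $$\limsup_{n\to\infty}\sum_{k=1}^{n}C_k^2(g)\log^2 k=\limsup_{n\to\infty}|U_n(g)|=+\infty,$$ where $C_k(g)=\int_0^1 g(x)\varphi_k(x)\,dx$ and $U_n(g)=\int_0^1 g(x)\sum_{k=1}^n d_k a_k\log k\,\varphi_k(x)\,dx=\sum_{k=1}^n a_k \log k\, C_k(g)$.
   Context: $A$ denotes the Banach space of absolutely continuous functions on $[0,1]$ with norm $\|f\|_A=\max_{[0,1]}|f|+\int_0^1|f'(x)|\,dx$. An orthonormal system on $[0,1]$ is a sequence of functions orthonormal in $L_2(0,1)$. $\log$ denotes the logarithm (so $\log 1=0$). *)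

theory Defs
  imports "HOL-Analysis.Analysis" "HOL-Library.Liminf_Limsup"
begin

definition abs_cont_01 :: "(real \<Rightarrow> real) \<Rightarrow> bool" where
  "abs_cont_01 f \<longleftrightarrow>
     (\<forall>\<epsilon>>0. \<exists>\<delta>>0. \<forall>(n::nat) (a::nat \<Rightarrow> real) (b::nat \<Rightarrow> real).
        (\<forall>i<n. 0 \<le> a i \<and> a i \<le> b i \<and> b i \<le> 1) \<longrightarrow>
        (\<forall>i<n. \<forall>j<n. i \<noteq> j \<longrightarrow> b i \<le> a j \<or> b j \<le> a i) \<longrightarrow>
        (\<Sum>i<n. b i - a i) < \<delta> \<longrightarrow>
        (\<Sum>i<n. \<bar>f (b i) - f (a i)\<bar>) < \<epsilon>)"

definition orthonormal_system_01 :: "(nat \<Rightarrow> real \<Rightarrow> real) \<Rightarrow> bool" where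
  "orthonormal_system_01 \<phi> \<longleftrightarrow>
     (\<forall>n\<ge>1. set_borel_measurable lebesgue {0..1} (\<phi> n)
            \<and> set_integrable lebesgue {0..1} (\<lambda>x. (\<phi> n x)\<^sup>2)) \<and>
     (\<forall>n\<ge>1. \<forall>m\<ge>1. (LINT x:{0..1}|lebesgue. \<phi> n x * \<phi> m x) = (if n = m then 1 else 0))"

definition coeffC :: "(nat \<Rightarrow> real \<Rightarrow> real) \<Rightarrow> (real \<Rightarrow> real) \<Rightarrow> nat \<Rightarrow> real" where
  "coeffC \<phi> g k = (LINT x:{0..1}|lebesgue. g x * \<phi> k x)"

end

theory Submission
  imports Defs
begin

text \<open>Being continuous and not identically zero, g satisfies \<sigma> g \<ge> c > 0 on some interval
  [\<alpha>, \<alpha> + L] for a sign \<sigma>. Cut this interval dyadically into pieces of length L / 2^(m+1) and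
  let \<phi>_k be the L2-normalised indicator function of a piece, distinct k getting distinct pieces:
  the \<phi>_k are orthonormal and \<sigma> C_k(g) \<ge> c sqrt(length of the piece) \<ge> 0. The lacunary index
  k_j = 3^(4^j) gets the piece of length L / 2^(2j+1), so \<sigma> C_(k_j)(g) \<ge> c sqrt(L/2) 2^-j, while
  log k_j = 4^j log 3. Hence C_(k_j)(g)^2 log^2 k_j and a_(k_j) log k_j C_(k_j)(g), for the
  square-summable weights a_(k_j) = \<sigma> 2^-j (and a_k = 0 otherwise), stay above a positive
  constant; as all summands are nonnegative, both partial sums tend to infinity.\<close>

lemma abs_cont_01_imp_uniformly_continuous_on:
  assumes "abs_cont_01 g"
  shows "uniformly_continuous_on {0..1} g"
  unfolding uniformly_continuous_on_def dist_real_def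
proof (intro allI impI)
  fix \<epsilon> :: real assume "0 < \<epsilon>"
  then obtain \<delta> where "\<delta> > 0" and small: "\<And>(n::nat) (a::nat \<Rightarrow> real) (b::nat \<Rightarrow> real).
        (\<forall>i<n. 0 \<le> a i \<and> a i \<le> b i \<and> b i \<le> 1) \<Longrightarrow>
        (\<forall>i<n. \<forall>j<n. i \<noteq> j \<longrightarrow> b i \<le> a j \<or> b j \<le> a i) \<Longrightarrow>
        (\<Sum>i<n. b i - a i) < \<delta> \<Longrightarrow> (\<Sum>i<n. \<bar>g (b i) - g (a i)\<bar>) < \<epsilon>"
    using assms unfolding abs_cont_01_def by blast
  have "\<bar>g y - g x\<bar> < \<epsilon>" if "x \<in> {0..1}" "y \<in> {0..1}" "\<bar>y - x\<bar> < \<delta>" for x y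
    using small[of 1 "\<lambda>_. min x y" "\<lambda>_. max x y"] that
    by (cases "x \<le> y") (auto simp: max_def min_def abs_minus_commute)
  with \<open>\<delta> > 0\<close>
  show "\<exists>\<delta>>0. \<forall>x\<in>{0..1}. \<forall>y\<in>{0..1}. \<bar>y - x\<bar> < \<delta> \<longrightarrow> \<bar>g y - g x\<bar> < \<epsilon>"
    by blast
qed

lemma continuous_on_sign_definite_interval:
  fixes g :: "real \<Rightarrow> real"
  assumes "continuous_on {0..1} g" "x0 \<in> {0..1}" "g x0 \<noteq> 0"
  obtains \<alpha> L where "0 \<le> \<alpha>" "\<alpha> + L \<le> 1" "0 < L"
    "\<And>x. x \<in> {\<alpha>..\<alpha>+L} \<Longrightarrow> \<bar>g x0\<bar> / 2 < sgn (g x0) * g x"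
proof -
  obtain \<delta> where "\<delta> > 0"
    and near: "\<And>x. x \<in> {0..1} \<Longrightarrow> \<bar>x - x0\<bar> < \<delta> \<Longrightarrow> \<bar>g x - g x0\<bar> < \<bar>g x0\<bar> / 2"
    using assms unfolding continuous_on_iff dist_real_def
    by (metis half_gt_zero zero_less_abs_iff)
  define L where "L = min \<delta> 1 / 2"
  define \<alpha> where "\<alpha> = (if x0 \<le> 1/2 then x0 else x0 - L)"
  have "0 < L" "L < \<delta>" "L \<le> 1/2" using \<open>\<delta> > 0\<close> by (auto simp: L_def)
  then have "0 \<le> \<alpha>" "\<alpha> + L \<le> 1" using assms(2) by (auto simp: \<alpha>_def)
  moreover have "\<bar>g x0\<bar> / 2 < sgn (g x0) * g x" if "x \<in> {\<alpha>..\<alpha>+L}" for x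
  proof -
    have "x \<in> {0..1}" "\<bar>x - x0\<bar> < \<delta>"
      using that \<open>0 \<le> \<alpha>\<close> \<open>\<alpha> + L \<le> 1\<close> \<open>L < \<delta>\<close> \<open>0 < L\<close>
      by (auto simp: \<alpha>_def split: if_splits)
    then have "\<bar>g x - g x0\<bar> < \<bar>g x0\<bar> / 2" by (rule near)
    then show ?thesis using assms(3) by (auto simp: sgn_if abs_if split: if_splits)
  qed
  ultimately show ?thesis using that \<open>0 < L\<close> by blast
qed

definition normalized_indicator :: "real \<Rightarrow> real \<Rightarrow> real \<Rightarrow> real" where
  "normalized_indicator u v x = indicator {u..<v} x / sqrt (v - u)"

lemma set_integral_indicator_Ico:
  assumes "0 \<le> u" "u \<le> v" "v \<le> 1"
  shows "set_integrable lebesgue {0..1} (\<lambda>x. c * indicator {u..<v} x :: real)"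
    and "(LINT x:{0..1}|lebesgue. c * indicator {u..<v} x :: real) = c * (v - u)"
proof -
  have restrict: "(\<lambda>x. indicator {0..1} x *\<^sub>R (c * indicator {u..<v} x))
      = (\<lambda>x. c * indicator {u..<v} x :: real)"
    using assms by (auto simp: fun_eq_iff split: split_indicator)
  show "set_integrable lebesgue {0..1} (\<lambda>x. c * indicator {u..<v} x :: real)"
    unfolding set_integrable_def restrict using assms by (intro integrable_mult_right integrable_real_indicator) auto
  show "(LINT x:{0..1}|lebesgue. c * indicator {u..<v} x :: real) = c * (v - u)"
    unfolding set_lebesgue_integral_def restrict using assms by simp
qed

lemma set_integrable_mult_normalized_indicator:
  assumes "set_integrable lebesgue {0..1} g"
  shows "set_integrable lebesgue {0..1} (\<lambda>x. g x * normalized_indicator u v x)"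
proof -
  have "(\<lambda>x. indicator {0..1} x *\<^sub>R (g x * normalized_indicator u v x))
      = (\<lambda>x. (indicator {0..1} x * g x / sqrt (v - u)) * indicator {u..<v} x)"
    by (auto simp: normalized_indicator_def fun_eq_iff)
  then show ?thesis using assms unfolding set_integrable_def
    by (auto intro!: integrable_real_mult_indicator integrable_divide)
qed

lemma normalized_indicator_squared:
  "u < v \<Longrightarrow> (normalized_indicator u v x)\<^sup>2 = 1 / (v - u) * indicator {u..<v} x"
  by (simp add: normalized_indicator_def power_divide split: split_indicator)

lemma orthonormal_system_01_normalized_indicators:
  assumes bounds: "\<And>k. 0 \<le> u k \<and> u k < v k \<and> v k \<le> 1"
    and disjoint: "disjoint_family (\<lambda>k. {u k..<v k})"
  shows "orthonormal_system_01 (\<lambda>k. normalized_indicator (u k) (v k))"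
  unfolding orthonormal_system_01_def
proof (intro conjI allI impI)
  fix n m :: nat
  have "set_integrable lebesgue {0..1} (\<lambda>x. 1 / (v n - u n) * indicator {u n..<v n} x)"
    using bounds[of n] by (intro set_integral_indicator_Ico) auto
  then show "set_integrable lebesgue {0..1} (\<lambda>x. (normalized_indicator (u n) (v n) x)\<^sup>2)"
    using bounds[of n] by (simp add: normalized_indicator_squared)
  show "set_borel_measurable lebesgue {0..1} (normalized_indicator (u n) (v n))"
    unfolding set_borel_measurable_def normalized_indicator_def by (intro measurable_completion) measurable
  show "(LINT x:{0..1}|lebesgue. normalized_indicator (u n) (v n) x * normalized_indicator (u m) (v m) x)
      = (if n = m then 1 else 0)"
  proof (cases "n = m")
    case True
    have "(LINT x:{0..1}|lebesgue. 1 / (v n - u n) * indicator {u n..<v n} x) = 1"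
      using bounds[of n] by (subst set_integral_indicator_Ico) auto
    then show ?thesis using True bounds[of n] by (simp add: normalized_indicator_squared flip: power2_eq_square)
  next
    case False
    then have "{u n..<v n} \<inter> {u m..<v m} = {}"
      using disjoint by (simp add: disjoint_family_on_def)
    then have "(\<lambda>x. normalized_indicator (u n) (v n) x * normalized_indicator (u m) (v m) x) = (\<lambda>x. 0)"
      unfolding normalized_indicator_def by (auto split: split_indicator)
    with False show ?thesis by (simp add: set_lebesgue_integral_def)
  qed
qed

lemma normalized_indicator_coefficient_ge:
  assumes "0 \<le> u" "u < v" "v \<le> 1" "set_integrable lebesgue {0..1} g"
    and "\<And>x. x \<in> {u..<v} \<Longrightarrow> c \<le> g x"
  shows "c * sqrt (v - u) \<le> (LINT x:{0..1}|lebesgue. g x * normalized_indicator u v x)"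
proof -
  have "c * sqrt (v - u) = c / sqrt (v - u) * (v - u)"
    using real_div_sqrt[of "v - u"] assms(2) by (simp add: field_simps)
  also have "\<dots> = (LINT x:{0..1}|lebesgue. c / sqrt (v - u) * indicator {u..<v} x)"
    using assms(1-3) by (subst set_integral_indicator_Ico) auto
  also have "\<dots> \<le> (LINT x:{0..1}|lebesgue. g x * normalized_indicator u v x)"
  proof (rule set_integral_mono)
    show "set_integrable lebesgue {0..1} (\<lambda>x. c / sqrt (v - u) * indicator {u..<v} x)"
      using assms(1-3) by (intro set_integral_indicator_Ico) auto
    show "set_integrable lebesgue {0..1} (\<lambda>x. g x * normalized_indicator u v x)"
      using assms(4) by (rule set_integrable_mult_normalized_indicator)
    show "c / sqrt (v - u) * indicator {u..<v} x \<le> g x * normalized_indicator u v x" for x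
      using assms(5)[of x] by (cases "x \<in> {u..<v}") (simp_all add: normalized_indicator_def divide_right_mono)
  qed
  finally show ?thesis .
qed

lemma set_integral_mult_sum_eq_coeffC:
  assumes "\<And>k. set_integrable lebesgue {0..1} (\<lambda>x. g x * \<phi> k x)"
  shows "(LINT x:{0..1}|lebesgue. g x * (\<Sum>k\<in>K. b k * \<phi> k x)) = (\<Sum>k\<in>K. b k * coeffC \<phi> g k)"
proof -
  have "(LINT x:{0..1}|lebesgue. g x * (\<Sum>k\<in>K. b k * \<phi> k x))
      = integral\<^sup>L lebesgue (\<lambda>x. \<Sum>k\<in>K. b k * (indicator {0..1} x * (g x * \<phi> k x)))"
    unfolding set_lebesgue_integral_def by (simp add: sum_distrib_left algebra_simps)
  also have "\<dots> = (\<Sum>k\<in>K. integral\<^sup>L lebesgue (\<lambda>x. b k * (indicator {0..1} x * (g x * \<phi> k x))))"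
    using assms unfolding set_integrable_def by (intro Bochner_Integration.integral_sum) auto
  finally show ?thesis
    by (simp add: coeffC_def set_lebesgue_integral_def)
qed

definition dyadic_point :: "real \<Rightarrow> real \<Rightarrow> nat \<Rightarrow> real" where
  "dyadic_point \<alpha> L m = \<alpha> + L * (1 - (1/2)^m)"

lemma dyadic_point_Suc_minus: "dyadic_point \<alpha> L (Suc m) - dyadic_point \<alpha> L m = L * (1/2)^Suc m"
  unfolding dyadic_point_def by (simp add: algebra_simps)

lemma dyadic_point_mono:
  "0 \<le> L \<Longrightarrow> m \<le> m' \<Longrightarrow> dyadic_point \<alpha> L m \<le> dyadic_point \<alpha> L m'"
  unfolding dyadic_point_def by (auto intro!: mult_left_mono power_decreasing)

lemma dyadic_point_bounds:
  "0 \<le> L \<Longrightarrow> \<alpha> \<le> dyadic_point \<alpha> L m \<and> dyadic_point \<alpha> L m \<le> \<alpha> + L"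
  unfolding dyadic_point_def by (simp add: mult_left_le power_le_one)

lemma disjoint_family_dyadic_intervals:
  assumes "0 \<le> L"
  shows "disjoint_family (\<lambda>m. {dyadic_point \<alpha> L m..<dyadic_point \<alpha> L (Suc m)})"
  unfolding disjoint_family_on_def
proof (intro ballI impI)
  fix m m' :: nat assume "m \<noteq> m'"
  then have "dyadic_point \<alpha> L (Suc m) \<le> dyadic_point \<alpha> L m'
      \<or> dyadic_point \<alpha> L (Suc m') \<le> dyadic_point \<alpha> L m"
    using assms by (auto intro!: dyadic_point_mono simp: nat_neq_iff)
  then show "{dyadic_point \<alpha> L m..<dyadic_point \<alpha> L (Suc m)}
      \<inter> {dyadic_point \<alpha> L m'..<dyadic_point \<alpha> L (Suc m')} = {}"
    by auto
qed

definition lacunary :: "nat \<Rightarrow> nat" where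
  "lacunary j = 3 ^ 4 ^ j"

lemma strict_mono_lacunary: "strict_mono lacunary"
  unfolding strict_mono_def lacunary_def by (intro allI impI power_strict_increasing) auto

lemma lacunary_pos: "0 < lacunary j"
  unfolding lacunary_def by simp

lemma ln_lacunary: "ln (real (lacunary j)) = 4 ^ j * ln 3"
  unfolding lacunary_def by (simp add: ln_realpow)

definition slot :: "nat \<Rightarrow> nat" where
  "slot k = (if k \<in> range lacunary then 2 * inv lacunary k else 2 * k + 1)"

lemma slot_lacunary [simp]: "slot (lacunary j) = 2 * j"
  using strict_mono_on_imp_inj_on[OF strict_mono_lacunary] by (simp add: slot_def)

lemma inj_slot: "inj slot"
  unfolding inj_def slot_def
  by (auto simp: strict_mono_on_imp_inj_on[OF strict_mono_lacunary] split: if_splits) presburger+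

definition dyadic_system :: "real \<Rightarrow> real \<Rightarrow> nat \<Rightarrow> real \<Rightarrow> real" where
  "dyadic_system \<alpha> L k = normalized_indicator (dyadic_point \<alpha> L (slot k)) (dyadic_point \<alpha> L (Suc (slot k)))"

lemma dyadic_slot_bounds:
  assumes "0 \<le> \<alpha>" "\<alpha> + L \<le> 1" "0 < L"
  shows "0 \<le> dyadic_point \<alpha> L (slot k) \<and> dyadic_point \<alpha> L (slot k) < dyadic_point \<alpha> L (Suc (slot k))
    \<and> dyadic_point \<alpha> L (Suc (slot k)) \<le> 1"
proof -
  have "0 < L * (1/2)^Suc (slot k)" using assms(3) by simp
  then show ?thesis
    using assms dyadic_point_Suc_minus[of \<alpha> L "slot k"]
      dyadic_point_bounds[of L \<alpha> "slot k"] dyadic_point_bounds[of L \<alpha> "Suc (slot k)"]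
    by linarith
qed

lemma orthonormal_system_01_dyadic_system:
  assumes "0 \<le> \<alpha>" "\<alpha> + L \<le> 1" "0 < L"
  shows "orthonormal_system_01 (dyadic_system \<alpha> L)"
proof -
  have "disjoint_family (\<lambda>k. {dyadic_point \<alpha> L (slot k)..<dyadic_point \<alpha> L (Suc (slot k))})"
    using disjoint_family_dyadic_intervals[of L \<alpha>] inj_slot assms(3)
    unfolding disjoint_family_on_def inj_def by auto
  then show ?thesis
    unfolding dyadic_system_def using dyadic_slot_bounds[OF assms]
    by (intro orthonormal_system_01_normalized_indicators) auto
qed

definition lacunary_weight :: "nat \<Rightarrow> real" where
  "lacunary_weight k = (if k \<in> range lacunary then (1/2)^inv lacunary k else 0)"

lemma lacunary_weight_lacunary [simp]: "lacunary_weight (lacunary j) = (1/2)^j"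
  using strict_mono_on_imp_inj_on[OF strict_mono_lacunary] by (simp add: lacunary_weight_def)

lemma lacunary_weight_nonneg: "0 \<le> lacunary_weight k"
  by (simp add: lacunary_weight_def)

lemma summable_lacunary_weight_squared: "summable (\<lambda>k. (lacunary_weight k)\<^sup>2)"
proof -
  have "(\<lambda>j. (lacunary_weight (lacunary j))\<^sup>2) = (\<lambda>j. (1/4)^j)"
    by (simp add: fun_eq_iff power2_eq_square flip: power_mult_distrib)
  then have "(\<lambda>j. (lacunary_weight (lacunary j))\<^sup>2) sums (1 / (1 - 1/4))"
    using geometric_sums[of "1/4 :: real"] by simp
  then have "(\<lambda>k. (lacunary_weight k)\<^sup>2) sums (1 / (1 - 1/4))"
    by (subst (asm) sums_mono_reindex[OF strict_mono_lacunary]) (auto simp: lacunary_weight_def)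
  then show ?thesis by (rule sums_summable)
qed

lemma lacunary_term_bounds:
  assumes "0 \<le> t" "t * (1/2)^j \<le> s"
  shows "(t * ln 3)\<^sup>2 \<le> (s * ln (real (lacunary j)))\<^sup>2"
    and "t * ln 3 \<le> lacunary_weight (lacunary j) * ln (real (lacunary j)) * s"
proof -
  have halves: "(1/2::real)^j * 4^j = 2^j"
    by (simp flip: power_mult_distrib)
  have "t * ln 3 * 1 \<le> t * ln 3 * 2^j"
    using assms(1) by (intro mult_left_mono) auto
  also have "\<dots> = t * ((1/2)^j * 4^j) * ln 3"
    by (simp add: halves)
  also have "\<dots> \<le> s * ln (real (lacunary j))"
    using assms by (simp add: ln_lacunary mult_right_mono mult.assoc[symmetric])
  finally show "(t * ln 3)\<^sup>2 \<le> (s * ln (real (lacunary j)))\<^sup>2"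
    using assms(1) by (intro power_mono) auto
  have "t * ln 3 = (1/2)^j * 4^j * ln 3 * (t * (1/2)^j)"
    by (simp add: halves flip: power_mult_distrib)
  also have "\<dots> \<le> (1/2)^j * 4^j * ln 3 * s"
    using assms(2) by (intro mult_left_mono) auto
  finally show "t * ln 3 \<le> lacunary_weight (lacunary j) * ln (real (lacunary j)) * s"
    by (simp add: ln_lacunary mult.assoc)
qed

lemma limsup_partial_sums_eq_infinity:
  fixes f :: "nat \<Rightarrow> real" and s :: "nat \<Rightarrow> nat"
  assumes nonneg: "\<And>k. 0 \<le> f k" and "0 < K" and s: "strict_mono s" "\<And>j. 0 < s j"
    and large: "\<And>j. K \<le> f (s j)"
  shows "limsup (\<lambda>n. ereal (\<Sum>k=1..n. f k)) = \<infinity>"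
proof -
  have "\<exists>N. \<forall>n\<ge>N. ereal B \<le> ereal (\<Sum>k=1..n. f k)" for B
  proof -
    obtain m :: nat where "B \<le> real m * K"
      using \<open>0 < K\<close> real_arch_simple[of "B / K"] by (auto simp: pos_divide_le_eq)
    moreover have "real m * K \<le> (\<Sum>k=1..n. f k)" if "s m \<le> n" for n
    proof -
      have "s ` {..<m} \<subseteq> {1..n}"
        using s that by (auto simp: Suc_le_eq dest: strict_monoD intro: order.strict_trans2)
      have "real m * K \<le> (\<Sum>j<m. f (s j))"
        using sum_mono[of "{..<m}" "\<lambda>_. K" "\<lambda>j. f (s j)"] large by simp
      also have "\<dots> = (\<Sum>k\<in>s ` {..<m}. f k)"
        using strict_mono_on_imp_inj_on[OF s(1)] by (simp add: sum.reindex inj_on_subset)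
      also have "\<dots> \<le> (\<Sum>k=1..n. f k)"
        using \<open>s ` {..<m} \<subseteq> {1..n}\<close> nonneg by (intro sum_mono2) auto
      finally show ?thesis .
    qed
    ultimately show ?thesis by force
  qed
  then have "(\<lambda>n. ereal (\<Sum>k=1..n. f k)) \<longlonglongrightarrow> \<infinity>"
    unfolding Lim_PInfty by blast
  then show ?thesis by (intro lim_imp_Limsup) auto
qed

locale sign_definite_interval =
  fixes g :: "real \<Rightarrow> real" and \<alpha> L c \<sigma> :: real
  assumes interval: "0 \<le> \<alpha>" "\<alpha> + L \<le> 1" "0 < L"
    and g_integrable: "set_integrable lebesgue {0..1} g"
    and sign_definite: "\<And>x. x \<in> {\<alpha>..<\<alpha>+L} \<Longrightarrow> c \<le> \<sigma> * g x"
    and c_pos: "0 < c"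
    and sign_squared: "\<sigma>\<^sup>2 = 1"
begin

lemma coeffC_ge: "c * sqrt (L * (1/2)^Suc (slot k)) \<le> \<sigma> * coeffC (dyadic_system \<alpha> L) g k"
proof -
  let ?u = "dyadic_point \<alpha> L (slot k)" and ?v = "dyadic_point \<alpha> L (Suc (slot k))"
  have "{?u..<?v} \<subseteq> {\<alpha>..<\<alpha>+L}"
    using dyadic_point_bounds[of L \<alpha> "slot k"] dyadic_point_bounds[of L \<alpha> "Suc (slot k)"] interval(3)
    by auto
  then have "c * sqrt (?v - ?u) \<le> (LINT x:{0..1}|lebesgue. (\<sigma> * g x) * normalized_indicator ?u ?v x)"
    using dyadic_slot_bounds[OF interval] g_integrable sign_definite
    by (intro normalized_indicator_coefficient_ge set_integrable_mult_right) auto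
  then show ?thesis
    by (simp add: dyadic_point_Suc_minus coeffC_def dyadic_system_def mult.assoc)
qed

lemma coeffC_nonneg: "0 \<le> \<sigma> * coeffC (dyadic_system \<alpha> L) g k"
proof -
  have "0 \<le> c * sqrt (L * (1/2)^Suc (slot k))"
    using c_pos interval(3) by simp
  also have "\<dots> \<le> \<sigma> * coeffC (dyadic_system \<alpha> L) g k"
    by (rule coeffC_ge)
  finally show ?thesis .
qed

lemma coeffC_lacunary_ge: "c * sqrt (L / 2) * (1/2)^j \<le> \<sigma> * coeffC (dyadic_system \<alpha> L) g (lacunary j)"
proof -
  have "L * (1/2)^Suc (slot (lacunary j)) = L / 2 * ((1/2)^j)\<^sup>2"
    by (simp add: power_even_eq)
  then have "sqrt (L * (1/2)^Suc (slot (lacunary j))) = sqrt (L / 2) * sqrt (((1/2)^j)\<^sup>2)"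
    by (simp only: real_sqrt_mult)
  then show ?thesis
    using coeffC_ge[of "lacunary j"] by (simp add: mult.assoc)
qed

lemma limsup_coeffC_log_squares:
  "limsup (\<lambda>n. ereal (\<Sum>k=1..n. (coeffC (dyadic_system \<alpha> L) g k)\<^sup>2 * (ln (real k))\<^sup>2)) = \<infinity>"
proof (rule limsup_partial_sums_eq_infinity[OF _ _ strict_mono_lacunary lacunary_pos])
  show "(c * sqrt (L / 2) * ln 3)\<^sup>2
      \<le> (coeffC (dyadic_system \<alpha> L) g (lacunary j))\<^sup>2 * (ln (real (lacunary j)))\<^sup>2" for j
    using lacunary_term_bounds(1)[OF _ coeffC_lacunary_ge] c_pos interval(3) sign_squared
    by (simp add: power_mult_distrib)
qed (use c_pos interval(3) in auto)

lemma limsup_weighted_coeffC_sums: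
  "limsup (\<lambda>n. ereal \<bar>\<Sum>k=1..n. \<sigma> * lacunary_weight k * ln (real k) * coeffC (dyadic_system \<alpha> L) g k\<bar>)
    = \<infinity>"
proof -
  let ?C = "coeffC (dyadic_system \<alpha> L) g"
  have summand: "\<sigma> * lacunary_weight k * ln (real k) * ?C k = lacunary_weight k * ln (real k) * (\<sigma> * ?C k)" for k
    by simp
  have summand_nonneg: "0 \<le> \<sigma> * lacunary_weight k * ln (real k) * ?C k" for k
  proof -
    have "0 \<le> ln (real k)" by (cases "k = 0") auto
    then show ?thesis
      unfolding summand by (metis mult_nonneg_nonneg lacunary_weight_nonneg coeffC_nonneg)
  qed
  moreover have "0 \<le> c * sqrt (L / 2)"
    using c_pos interval(3) by simp
  then have "c * sqrt (L / 2) * ln 3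
      \<le> \<sigma> * lacunary_weight (lacunary j) * ln (real (lacunary j)) * ?C (lacunary j)" for j
    unfolding summand by (rule lacunary_term_bounds(2)[OF _ coeffC_lacunary_ge])
  then have "limsup (\<lambda>n. ereal (\<Sum>k=1..n. \<sigma> * lacunary_weight k * ln (real k) * ?C k)) = \<infinity>"
    using c_pos interval(3) summand_nonneg
    by (intro limsup_partial_sums_eq_infinity[where K = "c * sqrt (L / 2) * ln 3",
          OF _ _ strict_mono_lacunary lacunary_pos]) auto
  ultimately show ?thesis by (simp add: sum_nonneg)
qed

end

theorem theorem4:
  fixes g :: "real \<Rightarrow> real"
  assumes "abs_cont_01 g"
    and "\<exists>x\<in>{0..1}. g x \<noteq> 0"
  shows "\<exists>(\<phi>::nat \<Rightarrow> real \<Rightarrow> real) (a::nat \<Rightarrow> real).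
           orthonormal_system_01 \<phi> \<and> summable (\<lambda>n. (a n)\<^sup>2) \<and>
           (let d = (\<lambda>k::nat. (1::real)) in
             limsup (\<lambda>n. ereal (\<Sum>k=1..n. (coeffC \<phi> g k)\<^sup>2 * (ln (real k))\<^sup>2)) = \<infinity> \<and>
             limsup (\<lambda>n. ereal \<bar>LINT x:{0..1}|lebesgue.
                         g x * (\<Sum>k=1..n. d k * a k * ln (real k) * \<phi> k x)\<bar>) = \<infinity> \<and>
             (\<forall>n. (LINT x:{0..1}|lebesgue. g x * (\<Sum>k=1..n. d k * a k * ln (real k) * \<phi> k x))
                  = (\<Sum>k=1..n. a k * ln (real k) * coeffC \<phi> g k)))"
proof -
  obtain x0 where x0: "x0 \<in> {0..1}" "g x0 \<noteq> 0" using assms(2) by blast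
  have "continuous_on {0..1} g"
    using abs_cont_01_imp_uniformly_continuous_on[OF assms(1)] uniformly_continuous_imp_continuous by blast
  then have g_int: "set_integrable lebesgue {0..1} g"
    by (rule absolutely_integrable_continuous_real)
  obtain \<alpha> L where interval: "0 \<le> \<alpha>" "\<alpha> + L \<le> 1" "0 < L"
    and sign: "\<And>x. x \<in> {\<alpha>..\<alpha>+L} \<Longrightarrow> \<bar>g x0\<bar> / 2 < sgn (g x0) * g x"
    using continuous_on_sign_definite_interval[OF \<open>continuous_on {0..1} g\<close> x0] by blast
  interpret sign_definite_interval g \<alpha> L "\<bar>g x0\<bar> / 2" "sgn (g x0)"
    using interval g_int sign x0(2) by unfold_locales (auto simp: less_imp_le sgn_if)
  define \<phi> where "\<phi> = dyadic_system \<alpha> L"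
  define a where "a k = sgn (g x0) * lacunary_weight k" for k
  have "set_integrable lebesgue {0..1} (\<lambda>x. g x * \<phi> k x)" for k
    unfolding \<phi>_def dyadic_system_def by (rule set_integrable_mult_normalized_indicator[OF g_int])
  then have U_eq: "(LINT x:{0..1}|lebesgue. g x * (\<Sum>k=1..n. a k * ln (real k) * \<phi> k x))
      = (\<Sum>k=1..n. a k * ln (real k) * coeffC \<phi> g k)" for n
    by (rule set_integral_mult_sum_eq_coeffC)
  have "summable (\<lambda>k. (a k)\<^sup>2)"
    using summable_lacunary_weight_squared sign_squared by (simp add: a_def power_mult_distrib)
  moreover have "orthonormal_system_01 \<phi>"
    unfolding \<phi>_def by (rule orthonormal_system_01_dyadic_system[OF interval])
  moreover note limsup_coeffC_log_squares limsup_weighted_coeffC_sums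
  ultimately show ?thesis
    unfolding \<phi>_def[symmetric] a_def[symmetric]
    by (intro exI[of _ \<phi>] exI[of _ a]) (unfold Let_def mult_1 U_eq, blast)
qed

end
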